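(* Let $C=(c_{ij})_{1\le i,j\le 6}$ be the Cartan matrix of type $E_6$: $c_{ii}=2$, $c_{ij}=c_{ji}=-1$ for $\{i,j\} \in \{\{1,3\},\{3,4\},\{4,5\},\{5,6\},\{2,4\}\}$, and $c_{ij}=0$ otherwise. Let $e_1,\dots,e_6$ be the standard basis of $\mathbb{Z}^6$, define $s_i \in \mathrm{GL}_6(\mathbb{Z})$ by $s_i(e_j) = e_j - c_{ji} e_i$, let $w = s_1 s_3 s_5 s_6$ and for a prime power $q$ let $T(q) = \mathbb{Z}^6/(q w - \mathrm{id})\mathbb{Z}^6$. Put $N = (q-1)(q^2+q+1) = q^3-1$. Then: if $q \equiv 0$ or $2 \pmod 3$, $T(q) \cong \mathbb{Z}/N \times \mathbb{Z}/N$; if $q \equiv 1 \pmod 3$, $T(q) \cong \mathbb{Z}/3 \times \mathbb{Z}/(N/3) \times \mathbb{Z}/N$ (these being the elementary divisors). In all cases $T(q) \cong \mathbb{Z}/(q-1) \times \mathbb{Z}/(q^2+q+1) \times \mathbb{Z}/N$. *)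

theory Defs
  imports "HOL-Algebra.Algebra"
begin

definition cartanE6 :: "nat \<Rightarrow> nat \<Rightarrow> int" where
  "cartanE6 i j =
     (if i = j then 2
      else if {i, j} \<in> {{1,3},{3,4},{4,5},{5,6},{2,4}} then -1 else 0)"

text \<open>Z^6 as integer vectors indexed by 1..6 (zero outside).\<close>
definition Z6 :: "(nat \<Rightarrow> int) set" where
  "Z6 = {v. \<forall>k. k \<notin> {1..6} \<longrightarrow> v k = 0}"

definition stdbasis :: "nat \<Rightarrow> nat \<Rightarrow> int" where
  "stdbasis i = (\<lambda>k. if k = i then 1 else 0)"

text \<open>The simple reflection s_i, the Z-linear map with s_i(e_j) = e_j - c_{ji} e_i.\<close>
definition sref :: "nat \<Rightarrow> (nat \<Rightarrow> int) \<Rightarrow> (nat \<Rightarrow> int)" where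
  "sref i v = (\<lambda>k. v k - (\<Sum>j\<in>{1..6}. v j * cartanE6 j i) * stdbasis i k)"

definition wE6 :: "(nat \<Rightarrow> int) \<Rightarrow> (nat \<Rightarrow> int)" where
  "wE6 = sref 1 \<circ> sref 3 \<circ> sref 5 \<circ> sref 6"

definition Z6_group :: "(nat \<Rightarrow> int) monoid" where
  "Z6_group = \<lparr>carrier = Z6, monoid.mult = (\<lambda>u v k. u k + v k), one = (\<lambda>k. 0)\<rparr>"

definition Tsub :: "nat \<Rightarrow> (nat \<Rightarrow> int) set" where
  "Tsub q = (\<lambda>v. (\<lambda>k. int q * wE6 v k - v k)) ` Z6"

definition Tgroup :: "nat \<Rightarrow> (nat \<Rightarrow> int) set monoid" where
  "Tgroup q = Z6_group Mod Tsub q"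

end

theory Submission
  imports Defs
begin

text \<open>
  Only the coordinates 1, 3, 5, 6 are moved by \<open>w\<close>, and \<open>(q w - id) u = x\<close> can be solved
  triangularly. The solvability conditions are three congruences: \<open>x\<^sub>2 \<equiv> 0\<close> modulo \<open>q - 1\<close>,
  \<open>q x\<^sub>5 + x\<^sub>6 - (q + 1)(q x\<^sub>1 + x\<^sub>3) \<equiv> 0\<close> modulo \<open>q\<^sup>2 + q + 1\<close> and
  \<open>x\<^sub>4 + (q - 1)(q x\<^sub>1 + x\<^sub>3) \<equiv> 0\<close> modulo \<open>q\<^sup>3 - 1\<close>. These three linear forms therefore
  induce \<open>T(q) \<cong> \<int>/(q - 1) \<times> \<int>/(q\<^sup>2 + q + 1) \<times> \<int>/(q\<^sup>3 - 1)\<close>. Since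
  \<open>q\<^sup>2 + q + 1 = (q + 2)(q - 1) + 3\<close>, the first two factors are coprime unless \<open>q \<equiv> 1 (mod 3)\<close>,
  and the Chinese remainder theorem gives the other two decompositions.
\<close>

lemma sum_1_6: "(\<Sum>j\<in>{1..6::nat}. f j) = f 1 + f 2 + f 3 + f 4 + f 5 + f 6"
proof -
  have "{1..6::nat} = {1,2,3,4,5,6}" by auto
  then show ?thesis by (simp add: algebra_simps)
qed

lemma sref_eq_fun_upd: "sref i v = v(i := v i - (\<Sum>j\<in>{1..6}. v j * cartanE6 j i))"
  by (auto simp: sref_def stdbasis_def)

lemma sref_1_3_5_6:
  "sref 1 v = v(1 := v 3 - v 1)" "sref 3 v = v(3 := v 1 + v 4 - v 3)"
  "sref 5 v = v(5 := v 4 + v 6 - v 5)" "sref 6 v = v(6 := v 5 - v 6)"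
  unfolding sref_eq_fun_upd sum_1_6 by (simp_all add: cartanE6_def doubleton_eq_iff)

lemma wE6_apply:
  "wE6 v = (\<lambda>k. if k = 1 then v 4 - v 3 else if k = 3 then v 1 - v 3 + v 4
     else if k = 5 then v 4 - v 6 else if k = 6 then v 5 - v 6 else v k)"
  unfolding wE6_def comp_def sref_1_3_5_6 by auto

lemma mem_TsubI:
  fixes q :: nat and x :: "nat \<Rightarrow> int"
  defines "Q \<equiv> int q"
  assumes "x \<in> Z6" and l: "x 2 = (Q - 1) * l"
    and m: "Q * x 5 + x 6 - (Q + 1) * (Q * x 1 + x 3) = (Q^2 + Q + 1) * m"
    and n: "x 4 + (Q - 1) * (Q * x 1 + x 3) = (Q^3 - 1) * n"
  shows "x \<in> Tsub q"
proof -
  \<comment> \<open>Solving \<open>(q w - id) u = x\<close>: the relations \<open>m\<close>, \<open>n\<close> force \<open>u 4\<close>, \<open>u 3\<close>, \<open>u 6\<close>,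
    and \<open>u 1\<close>, \<open>u 5\<close> are then read off from \<open>x 1\<close>, \<open>x 5\<close>.\<close>
  define a where "a = Q * x 1 + x 3"
  define u4 where "u4 = (Q^2 + Q + 1) * n - a"
  define u3 where "u3 = (Q^2 + Q) * n - a"
  define u6 where "u6 = Q^2 * n - a - m"
  define u where "u = (\<lambda>k::nat. if k = 1 then Q * (u4 - u3) - x 1 else if k = 2 then l
     else if k = 3 then u3 else if k = 4 then u4 else if k = 5 then Q * (u4 - u6) - x 5
     else if k = 6 then u6 else 0)"
  have "u \<in> Z6" by (auto simp: u_def Z6_def)
  have "x k = Q * wE6 u k - u k" for k
  proof -
    consider "k = 1" | "k = 2" | "k = 3" | "k = 4" | "k = 5" | "k = 6" | "k \<notin> {1..6}" by force
    then show ?thesis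
    proof cases
      case 3
      have "x 3 = a - Q * x 1" by (simp add: a_def)
      then show ?thesis
        using 3 by (simp add: wE6_apply u_def u3_def u4_def algebra_simps power2_eq_square)
    next
      case 4
      have "x 4 = (Q^3 - 1) * n - (Q - 1) * a" using n by (simp add: a_def)
      then show ?thesis
        using 4 by (simp add: wE6_apply u_def u4_def algebra_simps power2_eq_square power3_eq_cube)
    next
      case 6
      have "x 6 = (Q^2 + Q + 1) * m + (Q + 1) * a - Q * x 5" using m by (simp add: a_def)
      then show ?thesis
        using 6 by (simp add: wE6_apply u_def u4_def u6_def algebra_simps power2_eq_square)
    next
      case 7
      then show ?thesis using \<open>x \<in> Z6\<close> \<open>u \<in> Z6\<close> by (auto simp: Z6_def wE6_apply)
    qed (simp_all add: wE6_apply u_def l algebra_simps)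
  qed
  then show "x \<in> Tsub q" using \<open>u \<in> Z6\<close> by (auto simp: Tsub_def Q_def)
qed

lemma mem_Tsub_iff:
  fixes q :: nat and x :: "nat \<Rightarrow> int"
  defines "Q \<equiv> int q"
  shows "x \<in> Tsub q \<longleftrightarrow> x \<in> Z6 \<and> (Q - 1) dvd x 2
    \<and> (Q^2 + Q + 1) dvd (Q * x 5 + x 6 - (Q + 1) * (Q * x 1 + x 3))
    \<and> (Q^3 - 1) dvd (x 4 + (Q - 1) * (Q * x 1 + x 3))"
proof
  assume "x \<in> Tsub q"
  then obtain u where u: "u \<in> Z6" and x: "x = (\<lambda>k. Q * wE6 u k - u k)"
    by (auto simp: Tsub_def Q_def)
  have "x \<in> Z6" using u by (auto simp: Z6_def x wE6_apply)
  moreover have "x 2 = (Q - 1) * u 2"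
    by (simp add: x wE6_apply algebra_simps)
  moreover have "Q * x 5 + x 6 - (Q + 1) * (Q * x 1 + x 3)
      = (Q^2 + Q + 1) * ((Q + 1) * u 3 - Q * u 4 - u 6)"
    by (simp add: x wE6_apply algebra_simps power2_eq_square)
  moreover have "x 4 + (Q - 1) * (Q * x 1 + x 3) = (Q^3 - 1) * (u 4 - u 3)"
    by (simp add: x wE6_apply algebra_simps power3_eq_cube)
  ultimately show "x \<in> Z6 \<and> (Q - 1) dvd x 2
    \<and> (Q^2 + Q + 1) dvd (Q * x 5 + x 6 - (Q + 1) * (Q * x 1 + x 3))
    \<and> (Q^3 - 1) dvd (x 4 + (Q - 1) * (Q * x 1 + x 3))" by simp
qed (auto elim!: dvdE intro: mem_TsubI simp: Q_def)

lemma group_Z6: "group Z6_group"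
proof (rule groupI)
  fix x assume "x \<in> carrier Z6_group"
  then show "\<exists>y\<in>carrier Z6_group. y \<otimes>\<^bsub>Z6_group\<^esub> x = \<one>\<^bsub>Z6_group\<^esub>"
    by (intro bexI[of _ "\<lambda>k. - x k"]) (auto simp: Z6_group_def Z6_def)
qed (auto simp: Z6_group_def Z6_def)

definition cyclic_model :: "nat \<Rightarrow> (int \<times> int \<times> int) monoid" where
  "cyclic_model q = integer_mod_group (q - 1) \<times>\<times> integer_mod_group (q^2 + q + 1)
     \<times>\<times> integer_mod_group (q^3 - 1)"

definition cyclic_coords :: "nat \<Rightarrow> (nat \<Rightarrow> int) \<Rightarrow> int \<times> int \<times> int" where
  "cyclic_coords q x =
     (x 2 mod int (q - 1),
      (int q * x 5 + x 6 - (int q + 1) * (int q * x 1 + x 3)) mod int (q^2 + q + 1),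
      (x 4 + (int q - 1) * (int q * x 1 + x 3)) mod int (q^3 - 1))"

lemma mod_in_carrier_integer_mod_group: "x mod int n \<in> carrier (integer_mod_group n)"
  by (simp add: carrier_integer_mod_group)

lemma mod_carrier_integer_mod_group: "x \<in> carrier (integer_mod_group n) \<Longrightarrow> x mod int n = x"
  by (auto simp: carrier_integer_mod_group split: if_splits)

lemma cyclic_coords_hom: "cyclic_coords q \<in> hom Z6_group (cyclic_model q)"
proof (rule homI)
  fix x
  show "cyclic_coords q x \<in> carrier (cyclic_model q)"
    unfolding cyclic_model_def cyclic_coords_def carrier_DirProd
    by (intro SigmaI mod_in_carrier_integer_mod_group)
next
  fix x y
  show "cyclic_coords q (x \<otimes>\<^bsub>Z6_group\<^esub> y) = cyclic_coords q x \<otimes>\<^bsub>cyclic_model q\<^esub> cyclic_coords q y"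
    by (simp add: cyclic_model_def cyclic_coords_def Z6_group_def mod_add_eq algebra_simps)
qed

lemma cyclic_coords_surj: "cyclic_coords q ` carrier Z6_group = carrier (cyclic_model q)"
proof
  show "cyclic_coords q ` carrier Z6_group \<subseteq> carrier (cyclic_model q)"
    using cyclic_coords_hom by (rule hom_carrier)
  show "carrier (cyclic_model q) \<subseteq> cyclic_coords q ` carrier Z6_group"
  proof
    fix y assume y: "y \<in> carrier (cyclic_model q)"
    obtain a b c where abc: "y = (a, b, c)" by (cases y)
    define x where "x = (\<lambda>k::nat. if k = 2 then a else if k = 6 then b else if k = 4 then c else 0)"
    have "cyclic_coords q x = (a mod int (q - 1), b mod int (q^2 + q + 1), c mod int (q^3 - 1))"
      by (simp add: cyclic_coords_def x_def)
    also have "\<dots> = y"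
      using y by (simp only: abc cyclic_model_def carrier_DirProd mem_Times_iff fst_conv snd_conv
          mod_carrier_integer_mod_group)
    finally have "cyclic_coords q x = y" .
    moreover have "x \<in> carrier Z6_group" by (auto simp: x_def Z6_group_def Z6_def)
    ultimately show "y \<in> cyclic_coords q ` carrier Z6_group" by blast
  qed
qed

lemma kernel_cyclic_coords:
  assumes "q \<ge> 1" shows "kernel Z6_group (cyclic_model q) (cyclic_coords q) = Tsub q"
proof -
  have moduli: "int (q - 1) = int q - 1" "int (q^2 + q + 1) = int q ^ 2 + int q + 1"
    "int (q^3 - 1) = int q ^ 3 - 1"
    using assms by (simp_all add: of_nat_diff)
  show ?thesis
    unfolding kernel_def cyclic_coords_def cyclic_model_def moduli
    by (auto simp: mem_Tsub_iff Z6_group_def)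
qed

lemma Tgroup_iso_cyclic_model:
  assumes "q \<ge> 1" shows "Tgroup q \<cong> cyclic_model q"
proof -
  have "group (cyclic_model q)"
    unfolding cyclic_model_def by (intro DirProd_group group_integer_mod_group)
  then have "group_hom Z6_group (cyclic_model q) (cyclic_coords q)"
    by (simp add: group_hom_def group_hom_axioms_def group_Z6 cyclic_coords_hom)
  from group_hom.FactGroup_iso[OF this cyclic_coords_surj]
  show ?thesis by (simp add: Tgroup_def kernel_cyclic_coords[OF assms])
qed

lemma integer_mod_group_mult_iso:
  fixes m n :: nat
  assumes "coprime m n" and "m > 0" and "n > 0"
  shows "integer_mod_group (m * n) \<cong> integer_mod_group m \<times>\<times> integer_mod_group n"
proof -
  define h where "h = (\<lambda>x::int. (x mod int m, x mod int n))"
  have carriers: "carrier (integer_mod_group (m * n)) = {0..<int (m * n)}"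
    "carrier (integer_mod_group m \<times>\<times> integer_mod_group n) = {0..<int m} \<times> {0..<int n}"
    using assms by (simp_all add: carrier_integer_mod_group)
  have "h \<in> hom (integer_mod_group (m * n)) (integer_mod_group m \<times>\<times> integer_mod_group n)"
  proof (rule homI)
    show "h x \<in> carrier (integer_mod_group m \<times>\<times> integer_mod_group n)" for x
      unfolding carriers h_def using assms by simp
    have "int m dvd int (m * n)" "int n dvd int (m * n)" by simp_all
    then show "h (x \<otimes>\<^bsub>integer_mod_group (m * n)\<^esub> y) =
        h x \<otimes>\<^bsub>integer_mod_group m \<times>\<times> integer_mod_group n\<^esub> h y" for x y
      unfolding h_def by (simp add: mod_mod_cancel mod_add_eq del: of_nat_mult)
  qed
  moreover have inj: "inj_on h {0..<int (m * n)}"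
  proof (rule inj_onI)
    fix x y assume "x \<in> {0..<int (m * n)}" "y \<in> {0..<int (m * n)}" and "h x = h y"
    then have "int m dvd x - y" "int n dvd x - y" by (auto simp: h_def mod_eq_dvd_iff)
    with \<open>coprime m n\<close> have "int (m * n) dvd x - y" by (simp add: divides_mult)
    then have "x mod int (m * n) = y mod int (m * n)" by (simp only: mod_eq_dvd_iff)
    with \<open>x \<in> _\<close> \<open>y \<in> _\<close> show "x = y" by simp
  qed
  moreover have "h ` {0..<int (m * n)} = {0..<int m} \<times> {0..<int n}"
  proof (rule card_subset_eq)
    show "h ` {0..<int (m * n)} \<subseteq> {0..<int m} \<times> {0..<int n}" unfolding h_def using assms by auto
    show "card (h ` {0..<int (m * n)}) = card ({0..<int m} \<times> {0..<int n})"
      using inj by (simp add: card_image card_cartesian_product nat_mult_distrib)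
  qed simp
  ultimately show ?thesis
    unfolding is_iso_def iso_def bij_betw_def carriers by blast
qed

lemma DirProd_assoc_iso:
  "(G \<times>\<times> H) \<times>\<times> I \<cong> G \<times>\<times> H \<times>\<times> I" "G \<times>\<times> H \<times>\<times> I \<cong> (G \<times>\<times> H) \<times>\<times> I"
proof -
  have "(\<lambda>((x, y), z). (x, y, z)) \<in> iso ((G \<times>\<times> H) \<times>\<times> I) (G \<times>\<times> H \<times>\<times> I)"
    "(\<lambda>(x, y, z). ((x, y), z)) \<in> iso (G \<times>\<times> H \<times>\<times> I) ((G \<times>\<times> H) \<times>\<times> I)"
    by (auto simp: iso_def hom_def inj_on_def bij_betw_def image_def)
  then show "(G \<times>\<times> H) \<times>\<times> I \<cong> G \<times>\<times> H \<times>\<times> I" "G \<times>\<times> H \<times>\<times> I \<cong> (G \<times>\<times> H) \<times>\<times> I"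
    by (auto intro: is_isoI)
qed

lemma DirProd_iso_merge_left:
  assumes "group G" "group H" "G \<times>\<times> H \<cong> K"
  shows "G \<times>\<times> H \<times>\<times> I \<cong> K \<times>\<times> I"
proof -
  have "group (G \<times>\<times> H)" using assms by (intro DirProd_group)
  then have "(G \<times>\<times> H) \<times>\<times> I \<cong> K \<times>\<times> I"
    using assms(3) iso_refl by (rule group.DirProd_iso_trans)
  with DirProd_assoc_iso(2) show ?thesis by (rule iso_trans)
qed

lemma integer_mod_group_DirProd_elementary_divisors:
  fixes d a b :: nat
  assumes "coprime (d * a) b" and "d > 0" "a > 0" "b > 0"
  shows "integer_mod_group (d * a) \<times>\<times> integer_mod_group (d * b)
    \<cong> integer_mod_group d \<times>\<times> integer_mod_group (d * a * b)"
proof -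
  let ?Z = integer_mod_group
  have grp: "group (?Z n)" for n by simp
  have "coprime d b" using assms(1) by simp
  then have "?Z (d * a) \<times>\<times> ?Z (d * b) \<cong> ?Z (d * a) \<times>\<times> ?Z d \<times>\<times> ?Z b"
    using assms by (intro group.DirProd_iso_trans[OF grp iso_refl] integer_mod_group_mult_iso)
  also have "\<dots> \<cong> (?Z d \<times>\<times> ?Z (d * a)) \<times>\<times> ?Z b"
    using DirProd_commute_iso by (rule DirProd_iso_merge_left[OF grp grp])
  also have "\<dots> \<cong> ?Z d \<times>\<times> ?Z (d * a) \<times>\<times> ?Z b"
    by (rule DirProd_assoc_iso(1))
  also have "\<dots> \<cong> ?Z d \<times>\<times> ?Z (d * a * b)"
    using assms by (intro group.DirProd_iso_trans[OF grp iso_refl] group.iso_sym[OF grp]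
        integer_mod_group_mult_iso) simp_all
  finally show ?thesis .
qed

lemma coprime_pred_cyclotomic3:
  fixes q :: nat
  assumes "q \<ge> 1" and "\<not> 3 dvd q - 1"
  shows "coprime (q - 1) (q^2 + q + 1)"
proof -
  have "q^2 + q + 1 = (q + 2) * (q - 1) + 3"
    using assms(1) by (cases q) (simp_all add: power2_eq_square algebra_simps)
  then have "gcd (q - 1) (q^2 + q + 1) = gcd (q - 1) 3"
    by (simp only: gcd_add_mult)
  moreover have "coprime 3 (q - 1)"
    using assms(2) by (intro prime_imp_coprime) simp_all
  ultimately show ?thesis by (simp add: coprime_iff_gcd_eq_1 gcd.commute)
qed

lemma cube_minus_one_nat: "(q::nat)^3 - 1 = (q - 1) * (q^2 + q + 1)"
  by (cases q) (simp_all add: power2_eq_square power3_eq_cube algebra_simps)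

lemma cyclic_factors_iso_if_not_1_mod_3:
  fixes q :: nat
  assumes "q \<ge> 2" and "\<not> 3 dvd q - 1"
  shows "integer_mod_group (q - 1) \<times>\<times> integer_mod_group (q^2 + q + 1) \<cong> integer_mod_group (q^3 - 1)"
  using assms coprime_pred_cyclotomic3[of q] unfolding cube_minus_one_nat
  by (intro group.iso_sym[OF group_integer_mod_group] integer_mod_group_mult_iso) simp_all

lemma cyclic_factors_iso_if_1_mod_3:
  fixes q :: nat
  assumes "q \<ge> 2" and "q mod 3 = 1"
  shows "integer_mod_group (q - 1) \<times>\<times> integer_mod_group (q^2 + q + 1)
    \<cong> integer_mod_group 3 \<times>\<times> integer_mod_group ((q^3 - 1) div 3)"
proof -
  define j where "j = q div 3"
  define s where "s = 3 * j^2 + 3 * j + 1"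
  have "q = 3 * j + 1"
    using assms(2) div_mult_mod_eq[of q 3] by (simp add: j_def)
  then have q_j: "q - 1 = 3 * j" and q_s: "q^2 + q + 1 = 3 * s"
    by (simp_all add: s_def power2_eq_square algebra_simps)
  have coprime_js: "coprime (3 * j) s"
    using gcd_add_mult[of "3 * j" "j + 1" 1]
    by (simp add: s_def coprime_iff_gcd_eq_1 algebra_simps power2_eq_square)
  have "j > 0" using assms(1) q_j by simp
  have N_div: "(q^3 - 1) div 3 = 3 * j * s" unfolding cube_minus_one_nat q_j q_s by simp
  show ?thesis
    unfolding q_j q_s N_div
    by (intro integer_mod_group_DirProd_elementary_divisors coprime_js) (simp_all add: \<open>j > 0\<close> s_def)
qed

theorem mainTheorem5:
  fixes q p k :: nat
  assumes "Factorial_Ring.prime p" and "k \<ge> 1" and "q = p ^ k"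
  defines "N \<equiv> q ^ 3 - 1"
  shows "(q mod 3 = 0 \<or> q mod 3 = 2 \<longrightarrow>
           Tgroup q \<cong> integer_mod_group N \<times>\<times> integer_mod_group N)
       \<and> (q mod 3 = 1 \<longrightarrow>
           Tgroup q \<cong> integer_mod_group 3 \<times>\<times> integer_mod_group (N div 3) \<times>\<times> integer_mod_group N)
       \<and> Tgroup q \<cong> integer_mod_group (q - 1) \<times>\<times> integer_mod_group (q\<^sup>2 + q + 1) \<times>\<times> integer_mod_group N"
proof -
  have "q \<ge> 2"
    using assms(1-3) prime_ge_2_nat[of p] power_increasing[of 1 k p] by auto
  have T: "Tgroup q \<cong> integer_mod_group (q - 1) \<times>\<times> integer_mod_group (q^2 + q + 1) \<times>\<times> integer_mod_group N"
    using Tgroup_iso_cyclic_model \<open>q \<ge> 2\<close> by (simp add: cyclic_model_def N_def)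
  note merge = DirProd_iso_merge_left[OF group_integer_mod_group group_integer_mod_group]
  have "Tgroup q \<cong> integer_mod_group N \<times>\<times> integer_mod_group N" if "q mod 3 = 0 \<or> q mod 3 = 2"
  proof -
    have "\<not> 3 dvd q - 1" using that \<open>q \<ge> 2\<close> by presburger
    from merge[OF cyclic_factors_iso_if_not_1_mod_3[OF \<open>q \<ge> 2\<close> this]]
    show ?thesis unfolding N_def by (rule iso_trans[OF T[unfolded N_def]])
  qed
  moreover have "Tgroup q \<cong> integer_mod_group 3 \<times>\<times> integer_mod_group (N div 3) \<times>\<times> integer_mod_group N"
    if "q mod 3 = 1"
    using merge[OF cyclic_factors_iso_if_1_mod_3[OF \<open>q \<ge> 2\<close> that]]
    unfolding N_def by (rule iso_trans[OF T[unfolded N_def] iso_trans[OF _ DirProd_assoc_iso(1)]])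
  ultimately show ?thesis using T by blast
qed

end
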